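(* Let $n\geq 4$ be an integer divisible by $2$ or by $3$. Then $t(n)\leq n-3$.
   Context: For a positive integer $n$ let $S(\mathbb{Z}_n)$ be the set of bijections $\mathbb{Z}_n\to\mathbb{Z}_n$ (identified with $S_n$). For $\pi\in S(\mathbb{Z}_n)$, $\mathrm{cyc}(\pi)$ is the number of cycles (including fixed points) in its cycle decomposition, and $t(\pi)=n-\mathrm{cyc}(\pi)$ is the minimum number of transpositions whose product is $\pi$. The circular class of $\pi$ is $[\pi]=\{x\mapsto \pi(x+b): b\in\mathbb{Z}_n\}$, $t([\pi])=\min_{\sigma\in[\pi]}t(\sigma)$, and $t(n)=\max_{\pi\in S(\mathbb{Z}_n)}t([\pi])$. *)

theory Defs
  imports "HOL-Combinatorics.Permutations"
begin

text \<open>Z_n is modelled as {0..<n} :: nat set with arithmetic mod n. A bijection of Z_n is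
  a function p :: nat => nat with p permutes {0..<n} (identity outside).\<close>

definition cyc_orbit :: "(nat \<Rightarrow> nat) \<Rightarrow> nat \<Rightarrow> nat set" where
  "cyc_orbit p x = {y. \<exists>k. (p ^^ k) x = y}"

definition cyc :: "nat \<Rightarrow> (nat \<Rightarrow> nat) \<Rightarrow> nat" where
  "cyc n p = card (cyc_orbit p ` {0..<n})"

definition tperm :: "nat \<Rightarrow> (nat \<Rightarrow> nat) \<Rightarrow> nat" where
  "tperm n p = n - cyc n p"

definition rot :: "nat \<Rightarrow> (nat \<Rightarrow> nat) \<Rightarrow> nat \<Rightarrow> (nat \<Rightarrow> nat)" where
  "rot n p b = (\<lambda>x. if x < n then p ((x + b) mod n) else x)"

definition circ_class :: "nat \<Rightarrow> (nat \<Rightarrow> nat) \<Rightarrow> (nat \<Rightarrow> nat) set" where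
  "circ_class n p = rot n p ` {0..<n}"

definition tclass :: "nat \<Rightarrow> (nat \<Rightarrow> nat) \<Rightarrow> nat" where
  "tclass n p = Min (tperm n ` circ_class n p)"

definition tn :: "nat \<Rightarrow> nat" where
  "tn n = Max (tclass n ` {p. p permutes {0..<n}})"

end

theory Submission
  imports Defs "HOL-Number_Theory.Cong"
begin

text \<open>Suppose every rotation \<open>x \<mapsto> p(x + b)\<close> of a permutation \<open>p\<close> of \<open>\<int>\<^sub>n\<close>, \<open>n \<ge> 4\<close>,
  has at most two cycles. The fixed points of the rotation by \<open>b\<close> are the \<open>p y\<close> with
  \<open>y - p y = b\<close>; two of them together with any further point would give three cycles, so
  \<open>y \<mapsto> y - p y\<close> is a bijection of \<open>\<int>\<^sub>n\<close>. Likewise a transposition of that rotation comes from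
  \<open>y \<noteq> z\<close> with \<open>y + p y = z + p z\<close>, and together with its fixed point it would again give three
  cycles, so \<open>y \<mapsto> y + p y\<close> is a bijection too. Summing over \<open>\<int>\<^sub>n\<close>, the first bijection gives
  \<open>\<Sum> y \<equiv> \<Sum> y - \<Sum> p y = 0 (mod n)\<close>, impossible for even \<open>n\<close>; the squares of both give
  \<open>2 \<Sum> y\<^sup>2 \<equiv> \<Sum> ((y - p y)\<^sup>2 + (y + p y)\<^sup>2) = 4 \<Sum> y\<^sup>2 (mod n)\<close>, impossible for \<open>3 dvd n\<close>
  since \<open>2 \<Sum> y\<^sup>2 = n (n - 1) (2n - 1) / 3\<close>.\<close>

lemma cyc_orbit_self: "x \<in> cyc_orbit q x"
  unfolding cyc_orbit_def by (auto intro: exI[of _ 0])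

lemma cyc_orbit_fixpoint:
  assumes "q x = x"
  shows "cyc_orbit q x = {x}"
proof -
  have "(q ^^ k) x = x" for k
    by (induction k) (simp_all add: assms)
  then show ?thesis
    unfolding cyc_orbit_def by auto
qed

lemma cyc_orbit_swap_subset:
  assumes "q x = u" "q u = x"
  shows "cyc_orbit q x \<subseteq> {x, u}"
proof -
  have "(q ^^ k) x \<in> {x, u}" for k
  proof (induction k)
    case (Suc k)
    then consider "(q ^^ k) x = x" | "(q ^^ k) x = u"
      by blast
    then show ?case
      using assms by cases simp_all
  qed simp
  then show ?thesis
    unfolding cyc_orbit_def by auto
qed

lemma three_le_cyc:
  assumes "a < n" "b < n" "c < n"
    and "cyc_orbit q a \<noteq> cyc_orbit q b" "cyc_orbit q a \<noteq> cyc_orbit q c"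
      "cyc_orbit q b \<noteq> cyc_orbit q c"
  shows "3 \<le> cyc n q"
proof -
  have "3 = card {cyc_orbit q a, cyc_orbit q b, cyc_orbit q c}"
    using assms by simp
  also have "\<dots> \<le> card (cyc_orbit q ` {0..<n})"
    using assms by (intro card_mono) auto
  finally show ?thesis
    unfolding cyc_def .
qed

lemma exists_less_notin:
  assumes "finite S" "card S < n"
  shows "\<exists>c<n. c \<notin> S"
proof (rule ccontr)
  assume "\<not> ?thesis"
  then have "card {0..<n} \<le> card S"
    using assms(1) by (intro card_mono) auto
  with assms(2) show False
    by simp
qed

lemma three_le_cyc_two_fixpoints:
  assumes "q x = x" "q y = y" "x \<noteq> y" "x < n" "y < n" "3 \<le> n"
  shows "3 \<le> cyc n q"
proof -
  have "card {x, y} < n"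
    using assms(6) by (simp add: card_insert_if)
  then obtain c where "c < n" "c \<notin> {x, y}"
    using exists_less_notin[of "{x, y}" n] by blast
  then show ?thesis
    using assms cyc_orbit_self[of c q]
    by (intro three_le_cyc[of x n y c]) (auto simp: cyc_orbit_fixpoint)
qed

lemma three_le_cyc_fixpoint_swap:
  assumes "q w = w" "q x = u" "q u = x" "w \<noteq> x" "w \<noteq> u" "w < n" "x < n" "u < n" "4 \<le> n"
  shows "3 \<le> cyc n q"
proof -
  have "card {w, x, u} < n"
    using assms(9) by (simp add: card_insert_if)
  then obtain c where "c < n" "c \<notin> {w, x, u}"
    using exists_less_notin[of "{w, x, u}" n] by blast
  then show ?thesis
    using assms cyc_orbit_swap_subset[OF assms(2,3)] cyc_orbit_self[of c q] cyc_orbit_self[of x q]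
    by (intro three_le_cyc[of w n x c]) (auto simp: cyc_orbit_fixpoint)
qed

lemma rot_apply_shift:
  assumes "w < n" "x \<le> n" "y < n" "(y + x) mod n = (z + w) mod n"
  shows "rot n p ((z + n - x) mod n) w = p y"
proof -
  have "(w + (z + n - x) mod n) mod n = ((z + w) + (n - x)) mod n"
    using assms(2) by (simp add: mod_add_right_eq add_ac)
  also have "\<dots> = ((y + x) + (n - x)) mod n"
    using assms(4) by (metis mod_add_left_eq)
  also have "\<dots> = y"
    using assms(2,3) by simp
  finally show ?thesis
    using assms(1) by (simp add: rot_def)
qed

lemma bij_betw_if_inj_on_endo:
  assumes "finite A" "f ` A \<subseteq> A" "inj_on f A"
  shows "bij_betw f A A"
  using assms by (simp add: bij_betw_def endo_inj_surj)

lemma bij_diff_if_rotations_le_2_cycles: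
  assumes p: "p permutes {0..<n}" and "3 \<le> n"
    and few: "\<And>b. b < n \<Longrightarrow> cyc n (rot n p b) \<le> 2"
  shows "bij_betw (\<lambda>y. (y + n - p y) mod n) {0..<n} {0..<n}"
proof (rule bij_betw_if_inj_on_endo)
  have p_less: "p y < n" if "y < n" for y
    using permutes_in_image[OF p] that by simp
  show "inj_on (\<lambda>y. (y + n - p y) mod n) {0..<n}"
  proof (rule inj_onI, rule ccontr)
    fix y z
    assume yz: "y \<in> {0..<n}" "z \<in> {0..<n}" "y \<noteq> z"
      and same: "(y + n - p y) mod n = (z + n - p z) mod n"
    let ?q = "rot n p ((y + n - p y) mod n)"
    have "?q (p y) = p y"
      using yz p_less rot_apply_shift[of "p y" n "p y" y y p] by (simp add: less_imp_le)
    moreover have "?q (p z) = p z"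
      using yz p_less rot_apply_shift[of "p z" n "p z" z z p] by (simp add: same less_imp_le)
    moreover have "p y \<noteq> p z"
      using yz permutes_inj_on[OF p] by (auto dest: inj_onD)
    ultimately have "3 \<le> cyc n ?q"
      using yz p_less \<open>3 \<le> n\<close> by (intro three_le_cyc_two_fixpoints[of ?q "p y" "p z" n]) auto
    with few[of "(y + n - p y) mod n"] \<open>3 \<le> n\<close> show False
      by simp
  qed
qed auto

lemma bij_sum_if_rotations_le_2_cycles:
  assumes p: "p permutes {0..<n}" and "4 \<le> n"
    and few: "\<And>b. b < n \<Longrightarrow> cyc n (rot n p b) \<le> 2"
  shows "bij_betw (\<lambda>y. (y + p y) mod n) {0..<n} {0..<n}"
proof (rule bij_betw_if_inj_on_endo)
  have p_less: "p y < n" if "y < n" for y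
    using permutes_in_image[OF p] that by simp
  show "inj_on (\<lambda>y. (y + p y) mod n) {0..<n}"
  proof (rule inj_onI, rule ccontr)
    fix y z
    assume yz: "y \<in> {0..<n}" "z \<in> {0..<n}" "y \<noteq> z"
      and same: "(y + p y) mod n = (z + p z) mod n"
    define b where "b = (z + n - p y) mod n"
    let ?q = "rot n p b"
    have "b < n"
      using \<open>4 \<le> n\<close> by (simp add: b_def)
    have swap: "?q (p y) = p z" "?q (p z) = p y"
      using yz p_less same unfolding b_def by (auto intro!: rot_apply_shift less_imp_le)
    have "p y \<noteq> p z"
      using yz permutes_inj_on[OF p] by (auto dest: inj_onD)
    text \<open>Every shift is some \<open>w - p w\<close>, so the rotation by \<open>b\<close> also fixes \<open>p w\<close>.\<close>
    have "b \<in> (\<lambda>y. (y + n - p y) mod n) ` {0..<n}"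
      using bij_diff_if_rotations_le_2_cycles[of p n] p few \<open>4 \<le> n\<close> \<open>b < n\<close>
      by (simp add: bij_betw_def)
    then obtain w where "w < n" "(w + n - p w) mod n = b"
      by auto
    then have fixed: "?q (p w) = p w"
      using p_less rot_apply_shift[of "p w" n "p w" w w p] by (simp add: less_imp_le)
    then have "p w \<noteq> p y" "p w \<noteq> p z"
      using swap \<open>p y \<noteq> p z\<close> by metis+
    then have "3 \<le> cyc n ?q"
      using fixed swap yz p_less \<open>w < n\<close> \<open>4 \<le> n\<close>
      by (intro three_le_cyc_fixpoint_swap[of ?q "p w" "p y" "p z"]) simp_all
    with few[OF \<open>b < n\<close>] show False
      by simp
  qed
qed auto

lemma double_sum_int: "2 * (\<Sum>y<n. int y) = int n * (int n - 1)"
  by (induction n) (auto simp: algebra_simps)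

lemma six_sum_squares_int: "6 * (\<Sum>y<n. int y ^ 2) = int n * (int n - 1) * (2 * int n - 1)"
  by (induction n) (auto simp: algebra_simps power2_eq_square)

lemma not_dvd_sum_if_even:
  assumes "even n" "0 < n"
  shows "\<not> int n dvd (\<Sum>y<n. int y)"
proof
  assume "int n dvd (\<Sum>y<n. int y)"
  then obtain k where "(\<Sum>y<n. int y) = int n * k"
    by blast
  then have "int n * (2 * k) = int n * (int n - 1)"
    using double_sum_int[of n] by simp
  then have "2 * k = int n - 1"
    using assms(2) by simp
  with assms(1) show False
    by presburger
qed

lemma not_dvd_double_sum_squares_if_3_dvd:
  assumes "3 dvd n" "0 < n"
  shows "\<not> int n dvd 2 * (\<Sum>y<n. int y ^ 2)"
proof
  assume "int n dvd 2 * (\<Sum>y<n. int y ^ 2)"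
  then obtain k where "2 * (\<Sum>y<n. int y ^ 2) = int n * k"
    by blast
  then have "int n * (3 * k) = int n * ((int n - 1) * (2 * int n - 1))"
    using six_sum_squares_int[of n] by (simp add: algebra_simps)
  then have "3 * k = (int n - 1) * (2 * int n - 1)"
    using assms(2) by simp
  moreover obtain m where "n = 3 * m"
    using assms(1) by blast
  ultimately have "3 * (k - 6 * int m * int m + 3 * int m) = 1"
    by (simp add: algebra_simps)
  then show False
    by presburger
qed

lemma cong_int_diff_mod:
  assumes "x \<le> n"
  shows "[int ((y + n - x) mod n) = int y - int x] (mod int n)"
proof -
  have "int (y + n - x) = int y - int x + int n"
    using assms by (simp add: of_nat_diff)
  then show ?thesis
    by (simp add: of_nat_mod cong_def)
qed

lemma dvd_sum_if_bij_diff: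
  assumes p: "bij_betw p {..<n} {..<n}" and d: "bij_betw d {..<n} {..<n}"
    and d_cong: "\<And>y. y < n \<Longrightarrow> [int (d y) = int y - int (p y)] (mod int n)"
  shows "int n dvd (\<Sum>y<n. int y)"
proof -
  have "(\<Sum>y<n. int y) = (\<Sum>y<n. int (d y))"
    using sum.reindex_bij_betw[OF d, of int] by simp
  also have "[\<dots> = (\<Sum>y<n. int y - int (p y))] (mod int n)"
    using d_cong by (intro cong_sum) simp
  also have "(\<Sum>y<n. int y - int (p y)) = 0"
    using sum.reindex_bij_betw[OF p, of int] by (simp add: sum_subtractf)
  finally show ?thesis
    by (simp add: cong_0_iff)
qed

lemma dvd_double_sum_squares_if_bij_diff_sum:
  assumes p: "bij_betw p {..<n} {..<n}" and d: "bij_betw d {..<n} {..<n}"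
    and g: "bij_betw g {..<n} {..<n}"
    and d_cong: "\<And>y. y < n \<Longrightarrow> [int (d y) = int y - int (p y)] (mod int n)"
    and g_cong: "\<And>y. y < n \<Longrightarrow> [int (g y) = int y + int (p y)] (mod int n)"
  shows "int n dvd 2 * (\<Sum>y<n. int y ^ 2)"
proof -
  define S where "S = (\<Sum>y<n. int y ^ 2)"
  have "2 * S = (\<Sum>y<n. int (d y) ^ 2) + (\<Sum>y<n. int (g y) ^ 2)"
    using sum.reindex_bij_betw[OF d, of "\<lambda>y. int y ^ 2"]
      sum.reindex_bij_betw[OF g, of "\<lambda>y. int y ^ 2"] by (simp add: S_def)
  also have "[\<dots> = (\<Sum>y<n. (int y - int (p y)) ^ 2) + (\<Sum>y<n. (int y + int (p y)) ^ 2)] (mod int n)"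
    using d_cong g_cong by (intro cong_add cong_sum cong_pow) simp_all
  finally have cong_squares:
    "[2 * S = (\<Sum>y<n. (int y - int (p y)) ^ 2) + (\<Sum>y<n. (int y + int (p y)) ^ 2)] (mod int n)" .
  have "(\<Sum>y<n. (int y - int (p y)) ^ 2) + (\<Sum>y<n. (int y + int (p y)) ^ 2)
      = (\<Sum>y<n. 2 * int y ^ 2 + 2 * int (p y) ^ 2)"
    unfolding sum.distrib[symmetric] by (intro sum.cong) (simp_all add: power2_eq_square algebra_simps)
  also have "\<dots> = 2 * S + 2 * (\<Sum>y<n. int (p y) ^ 2)"
    by (simp add: S_def sum.distrib sum_distrib_left)
  also have "(\<Sum>y<n. int (p y) ^ 2) = S"
    using sum.reindex_bij_betw[OF p, of "\<lambda>y. int y ^ 2"] by (simp add: S_def)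
  finally have "(\<Sum>y<n. (int y - int (p y)) ^ 2) + (\<Sum>y<n. (int y + int (p y)) ^ 2) = 4 * S"
    by simp
  with cong_squares have "[2 * S = 4 * S] (mod int n)"
    by (simp only:)
  then have "int n dvd 4 * S - 2 * S"
    by (simp add: cong_iff_dvd_diff cong_sym_eq)
  then show ?thesis
    by (simp add: S_def)
qed

lemma exists_rotation_three_le_cyc:
  assumes p: "p permutes {0..<n}" and "4 \<le> n" and "2 dvd n \<or> 3 dvd n"
  shows "\<exists>b<n. 3 \<le> cyc n (rot n p b)"
proof (rule ccontr)
  assume "\<not> ?thesis"
  then have few: "\<And>b. b < n \<Longrightarrow> cyc n (rot n p b) \<le> 2"
    by force
  have p_le: "p y \<le> n" if "y < n" for y
    using permutes_in_image[OF p] that by (simp add: less_imp_le)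
  have p_bij: "bij_betw p {..<n} {..<n}"
    using permutes_imp_bij[OF p] by (simp add: atLeast0LessThan)
  have d_bij: "bij_betw (\<lambda>y. (y + n - p y) mod n) {..<n} {..<n}"
    using bij_diff_if_rotations_le_2_cycles[of p n] p few \<open>4 \<le> n\<close>
    by (simp add: atLeast0LessThan)
  have d_cong: "[int ((y + n - p y) mod n) = int y - int (p y)] (mod int n)" if "y < n" for y
    using p_le[OF that] by (rule cong_int_diff_mod)
  consider "even n" | "3 dvd n"
    using assms(3) by blast
  then show False
  proof cases
    case 1
    then show False
      using dvd_sum_if_bij_diff[OF p_bij d_bij d_cong] not_dvd_sum_if_even \<open>4 \<le> n\<close> by simp
  next
    case 2
    have g_bij: "bij_betw (\<lambda>y. (y + p y) mod n) {..<n} {..<n}"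
      using bij_sum_if_rotations_le_2_cycles[of p n] p few \<open>4 \<le> n\<close>
      by (simp add: atLeast0LessThan)
    have g_cong: "[int ((y + p y) mod n) = int y + int (p y)] (mod int n)" for y
      by (simp add: of_nat_mod)
    show False
      using dvd_double_sum_squares_if_bij_diff_sum[OF p_bij d_bij g_bij d_cong g_cong]
        not_dvd_double_sum_squares_if_3_dvd[OF 2] \<open>4 \<le> n\<close> by simp
  qed
qed

lemma tclass_le_tperm_rot:
  assumes "b < n"
  shows "tclass n p \<le> tperm n (rot n p b)"
  unfolding tclass_def circ_class_def using assms by (intro Min_le) auto

theorem theorem1p3:
  fixes n :: nat
  assumes "n \<ge> 4" and "2 dvd n \<or> 3 dvd n"
  shows "tn n \<le> n - 3"
proof -
  have "tclass n p \<le> n - 3" if p: "p permutes {0..<n}" for p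
  proof -
    obtain b where "b < n" "3 \<le> cyc n (rot n p b)"
      using exists_rotation_three_le_cyc[OF p assms] by blast
    then have "tclass n p \<le> tperm n (rot n p b)"
      by (intro tclass_le_tperm_rot)
    also have "\<dots> \<le> n - 3"
      using \<open>3 \<le> cyc n (rot n p b)\<close> by (simp add: tperm_def)
    finally show ?thesis .
  qed
  moreover have "finite {p. p permutes {0..<n}}"
    by (simp add: finite_permutations)
  moreover have "{p. p permutes {0..<n}} \<noteq> {}"
    using permutes_id by blast
  ultimately show ?thesis
    unfolding tn_def by (subst Max_le_iff) auto
qed

end
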